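(* Let $\gamma\ge0$ and $\alpha_i,\beta_i\ge0$ with $\gamma+\sum_i\alpha_i+\sum_i\beta_i=1$. The separation distance between the distribution of $k$ successive (independent) applications of an $(\vec{\alpha},\vec{\beta},\gamma)$ shuffle to an $n$-card deck and the uniform distribution on $S_n$ is at most \[ \binom{n}{2}\Big[\sum_i \alpha_i^2+\sum_i\beta_i^2\Big]^k .\]
   Context: An $(\vec{\alpha},\vec{\beta},\gamma)$ shuffle of $n$ cards is the random permutation $\pi$ of $\{1,\dots,n\}$ produced as follows. Choose a word of length $n$ of integers with independent letters, letter $i>0$ with probability $\alpha_i$, letter $-i$ ($i>0$) with probability $\beta_i$, letter $0$ with probability $\gamma$. Process the occurring letter values in increasing order of the integers, assigning consecutive blocks of $\{1,\dots,n\}$ starting from $1$: a negative value's block is written at its positions in decreasing order from left to right; the block of $0$ is written at its positions in uniformly random order; a positive value's block is written at its positions in increasing order from left to right. $\pi(p)$ is the integer at position $p$. The separation distance between a probability $P$ on $S_n$ and the uniform distribution $U$ is $\max_{\pi\in S_n}\big(1-\frac{P(\pi)}{U(\pi)}\big)$. *)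

theory Defs
  imports "HOL-Probability.Probability" "HOL-Combinatorics.Permutations"
begin

text \<open>Letters are integers. Letter i>0 has probability al i, letter -i (i>0) has
probability be i, letter 0 has probability ga. The values al 0, be 0 are irrelevant.\<close>

definition letter_pmf :: "(nat \<Rightarrow> real) \<Rightarrow> (nat \<Rightarrow> real) \<Rightarrow> real \<Rightarrow> int pmf" where
  "letter_pmf al be ga = embed_pmf (\<lambda>z::int.
     if z > 0 then al (nat z) else if z < 0 then be (nat (- z)) else ga)"

definition word_pmf :: "nat \<Rightarrow> (nat \<Rightarrow> real) \<Rightarrow> (nat \<Rightarrow> real) \<Rightarrow> real \<Rightarrow> (nat \<Rightarrow> int) pmf" where
  "word_pmf n al be ga = Pi_pmf {1..n} 0 (\<lambda>_. letter_pmf al be ga)"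

definition block_start :: "nat \<Rightarrow> (nat \<Rightarrow> int) \<Rightarrow> int \<Rightarrow> nat" where
  "block_start n w v = card {q \<in> {1..n}. w q < v}"

definition block_size :: "nat \<Rightarrow> (nat \<Rightarrow> int) \<Rightarrow> int \<Rightarrow> nat" where
  "block_size n w v = card {q \<in> {1..n}. w q = v}"

definition compatible_perms :: "nat \<Rightarrow> (nat \<Rightarrow> int) \<Rightarrow> (nat \<Rightarrow> nat) set" where
  "compatible_perms n w = {\<pi>. \<pi> permutes {1..n} \<and>
     (\<forall>p\<in>{1..n}. block_start n w (w p) < \<pi> p \<and>
                  \<pi> p \<le> block_start n w (w p) + block_size n w (w p)) \<and>
     (\<forall>p\<in>{1..n}. \<forall>q\<in>{1..n}. p < q \<and> w p = w q \<and> w p > 0 \<longrightarrow> \<pi> p < \<pi> q) \<and>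
     (\<forall>p\<in>{1..n}. \<forall>q\<in>{1..n}. p < q \<and> w p = w q \<and> w p < 0 \<longrightarrow> \<pi> p > \<pi> q)}"

text \<open>One (al, be, ga) shuffle of n cards: pi p is the integer at position p;
the 0-block is written in uniformly random order, i.e. pi is uniform among
the compatible arrangements.\<close>

definition shuffle_pmf :: "nat \<Rightarrow> (nat \<Rightarrow> real) \<Rightarrow> (nat \<Rightarrow> real) \<Rightarrow> real \<Rightarrow> (nat \<Rightarrow> nat) pmf" where
  "shuffle_pmf n al be ga =
     bind_pmf (word_pmf n al be ga) (\<lambda>w. pmf_of_set (compatible_perms n w))"

fun iter_shuffle_pmf :: "nat \<Rightarrow> (nat \<Rightarrow> real) \<Rightarrow> (nat \<Rightarrow> real) \<Rightarrow> real \<Rightarrow> nat \<Rightarrow> (nat \<Rightarrow> nat) pmf" where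
  "iter_shuffle_pmf n al be ga 0 = return_pmf id"
| "iter_shuffle_pmf n al be ga (Suc k) =
     bind_pmf (iter_shuffle_pmf n al be ga k)
       (\<lambda>\<sigma>. map_pmf (\<lambda>\<pi>. \<pi> \<circ> \<sigma>) (shuffle_pmf n al be ga))"

definition sep_dist :: "nat \<Rightarrow> (nat \<Rightarrow> nat) pmf \<Rightarrow> real" where
  "sep_dist n P = Max ((\<lambda>\<pi>. 1 - pmf P \<pi> / (1 / fact n)) ` {\<pi>. \<pi> permutes {1..n}})"

end

theory Submission
  imports Defs
begin

text \<open>A shuffle is determined by its word together with a uniformly random strict order of the
  positions carrying the letter 0: it ranks positions by letter, breaking ties by position
  (reversed for negative letters) or by that order. Composing a shuffle with an arrangement
  \<open>s\<close> is the same as relabelling this data by \<open>s\<close> and breaking the ties by \<open>s\<close> instead,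
  and relabelling preserves the law of the data. So \<open>k\<close> shuffles rank the cards \<open>k\<close> times,
  each time by a fresh letter with ties broken by the previous arrangement. If every pair of
  cards has at some step received different letters or the letter 0, the outcome does not depend
  on the initial arrangement; relabelling then shows that, jointly with this event, every
  permutation is equally likely, so each has probability at least \<open>P(separation) / n!\<close>.
  A fixed pair stays tied at a nonzero letter in one step with probability
  \<open>\<Sum>\<alpha>\<^sub>i\<^sup>2 + \<Sum>\<beta>\<^sub>i\<^sup>2\<close>, and a union bound over the \<open>n choose 2\<close> pairs
  gives the estimate.\<close>

section \<open>Ranking permutations\<close>

definition rank_perm :: "nat \<Rightarrow> nat rel \<Rightarrow> nat \<Rightarrow> nat" where
  "rank_perm n r c = (if c \<in> {1..n} then Suc (card {y\<in>{1..n}. (y, c) \<in> r}) else c)"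

lemma rank_perm_strict_mono:
  assumes r: "strict_linear_order_on {1..n} r" and "x \<in> {1..n}" "y \<in> {1..n}" "(x, y) \<in> r"
  shows "rank_perm n r x < rank_perm n r y"
proof -
  have "{z\<in>{1..n}. (z, x) \<in> r} \<subset> {z\<in>{1..n}. (z, y) \<in> r}"
    using r assms(2-4) unfolding strict_linear_order_on_def trans_def irrefl_def by blast
  then show ?thesis
    using assms(2,3) by (simp add: rank_perm_def psubset_card_mono)
qed

lemma rank_perm_less_iff:
  assumes r: "strict_linear_order_on {1..n} r" and x: "x \<in> {1..n}" and y: "y \<in> {1..n}"
  shows "rank_perm n r x < rank_perm n r y \<longleftrightarrow> (x, y) \<in> r"
proof
  assume less: "rank_perm n r x < rank_perm n r y"
  then have "x \<noteq> y" by auto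
  then have "(x, y) \<in> r \<or> (y, x) \<in> r"
    using r x y unfolding strict_linear_order_on_def total_on_def by blast
  then show "(x, y) \<in> r"
    using rank_perm_strict_mono[OF r y x] less by auto
qed (rule rank_perm_strict_mono[OF r x y])

lemma rank_perm_permutes:
  assumes r: "strict_linear_order_on {1..n} r"
  shows "rank_perm n r permutes {1..n}"
proof (rule inj_imp_permutes)
  show "inj_on (rank_perm n r) {1..n}"
  proof (rule inj_onI, rule ccontr)
    fix x y assume x: "x \<in> {1..n}" and y: "y \<in> {1..n}" and "x \<noteq> y"
      and eq: "rank_perm n r x = rank_perm n r y"
    then have "(x, y) \<in> r \<or> (y, x) \<in> r"
      using r unfolding strict_linear_order_on_def total_on_def by blast
    then show False
      using eq rank_perm_strict_mono[OF r x y] rank_perm_strict_mono[OF r y x] by auto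
  qed
  show "rank_perm n r x \<in> {1..n}" if x: "x \<in> {1..n}" for x
  proof -
    have "(x, x) \<notin> r" using r unfolding strict_linear_order_on_def irrefl_def by blast
    then have "{y\<in>{1..n}. (y, x) \<in> r} \<subset> {1..n}" using x by blast
    then have "card {y\<in>{1..n}. (y, x) \<in> r} < card {1..n}"
      by (rule psubset_card_mono[rotated]) simp
    then show ?thesis using x by (simp add: rank_perm_def)
  qed
qed (auto simp: rank_perm_def)

lemma permutes_eq_rank_perm:
  assumes p: "p permutes {1..n}" and r: "strict_linear_order_on {1..n} r"
    and mono: "\<And>x y. x \<in> {1..n} \<Longrightarrow> y \<in> {1..n} \<Longrightarrow> (x, y) \<in> r \<Longrightarrow> p x < p y"
  shows "p = rank_perm n r"
proof
  fix c
  show "p c = rank_perm n r c"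
  proof (cases "c \<in> {1..n}")
    case c: True
    have pc: "p c \<in> {1..n}" using c permutes_in_image[OF p] by blast
    have "(y, c) \<in> r \<longleftrightarrow> p y < p c" if y: "y \<in> {1..n}" for y
    proof
      assume "p y < p c"
      then have "y \<noteq> c" "\<not> p c < p y" by auto
      then show "(y, c) \<in> r"
        using mono[OF c y] y c r unfolding strict_linear_order_on_def total_on_def by blast
    qed (rule mono[OF y c])
    then have "{y\<in>{1..n}. (y, c) \<in> r} = {y\<in>{1..n}. p y < p c}" by blast
    moreover have "card {y\<in>{1..n}. p y < p c} = p c - 1"
    proof -
      have "p ` {y\<in>{1..n}. p y < p c} = {v\<in>p ` {1..n}. v < p c}" by blast
      also have "\<dots> = {1..<p c}" unfolding permutes_image[OF p] using pc by auto
      finally have "card {y\<in>{1..n}. p y < p c} = card {1..<p c}"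
        using card_image[OF permutes_inj_on[OF p]] by metis
      then show ?thesis by simp
    qed
    ultimately show ?thesis using c pc by (simp add: rank_perm_def)
  qed (auto simp: rank_perm_def permutes_not_in[OF p])
qed

definition strict_orders_on :: "'a set \<Rightarrow> 'a rel set" where
  "strict_orders_on A = {Q. Q \<subseteq> A \<times> A \<and> strict_linear_order_on A Q}"

definition induced_order :: "'a set \<Rightarrow> ('a \<Rightarrow> 'b::ord) \<Rightarrow> 'a rel" where
  "induced_order A f = {(x, y) \<in> A \<times> A. f x < f y}"

lemma induced_order_in_strict_orders_on:
  fixes f :: "'a \<Rightarrow> 'b::linorder"
  assumes "inj_on f A"
  shows "induced_order A f \<in> strict_orders_on A"
  using assms unfolding strict_orders_on_def induced_order_def inj_on_def
  by (auto simp: strict_linear_order_on_def trans_def irrefl_def total_on_def)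
    (metis linorder_neqE)

lemma finite_strict_orders_on: "finite A \<Longrightarrow> finite (strict_orders_on A)"
  unfolding strict_orders_on_def by (rule finite_subset[of _ "Pow (A \<times> A)"]) auto

lemma strict_orders_on_nonempty: "strict_orders_on (A :: 'a::linorder set) \<noteq> {}"
  using induced_order_in_strict_orders_on[of id A] by auto

lemma permutes_eq_if_same_order:
  fixes p q :: "nat \<Rightarrow> nat"
  assumes p: "p permutes {1..n}" and q: "q permutes {1..n}"
    and same: "\<And>x y. x \<in> {1..n} \<Longrightarrow> y \<in> {1..n} \<Longrightarrow> p x < p y \<longleftrightarrow> q x < q y"
  shows "p = q"
proof -
  have "induced_order {1..n} p \<in> strict_orders_on {1..n}"
    by (rule induced_order_in_strict_orders_on[OF permutes_inj_on[OF p]])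
  then have r: "strict_linear_order_on {1..n} (induced_order {1..n} p)"
    by (simp add: strict_orders_on_def)
  show ?thesis
    using permutes_eq_rank_perm[OF p r] permutes_eq_rank_perm[OF q r] same
    by (auto simp: induced_order_def)
qed

section \<open>Arrangements written by a word\<close>

definition zero_positions :: "nat \<Rightarrow> (nat \<Rightarrow> int) \<Rightarrow> nat set" where
  "zero_positions n w = {p\<in>{1..n}. w p = 0}"

text \<open>\<open>s\<close> is the arrangement before the shuffle; for \<open>s = id\<close>, ranking by this order writes out
  the word as the shuffle prescribes, with the 0-block in the order \<open>Q\<close>.\<close>

definition shuffle_order :: "(nat \<Rightarrow> int) \<Rightarrow> nat rel \<Rightarrow> (nat \<Rightarrow> nat) \<Rightarrow> nat rel" where
  "shuffle_order w Q s = {(x, y). w x < w y \<or> w x = w y \<and>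
     (0 < w y \<and> s x < s y \<or> w y < 0 \<and> s y < s x \<or> w y = 0 \<and> (x, y) \<in> Q)}"

definition step_data :: "nat \<Rightarrow> ((nat \<Rightarrow> int) \<times> nat rel) set" where
  "step_data n = {d. snd d \<in> strict_orders_on (zero_positions n (fst d))}"

definition shuffle_step :: "nat \<Rightarrow> (nat \<Rightarrow> int) \<times> nat rel \<Rightarrow> (nat \<Rightarrow> nat) \<Rightarrow> nat \<Rightarrow> nat" where
  "shuffle_step n d s = rank_perm n (shuffle_order (fst d) (snd d) s)"

lemma strict_linear_order_on_shuffle_order:
  assumes s: "inj_on s {1..n}" and Q: "Q \<in> strict_orders_on (zero_positions n w)"
  shows "strict_linear_order_on {1..n} (shuffle_order w Q s)"
proof -
  have Q_trans: "trans Q" and Q_irrefl: "irrefl Q"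
    and Q_total: "\<And>x y. x \<in> {1..n} \<Longrightarrow> y \<in> {1..n} \<Longrightarrow> w x = 0 \<Longrightarrow> w y = 0 \<Longrightarrow> x \<noteq> y
      \<Longrightarrow> (x, y) \<in> Q \<or> (y, x) \<in> Q"
    using Q unfolding strict_orders_on_def strict_linear_order_on_def total_on_def zero_positions_def
    by auto
  have s_neq: "s x \<noteq> s y" if "x \<in> {1..n}" "y \<in> {1..n}" "x \<noteq> y" for x y
    using s that unfolding inj_on_def by blast
  have "trans (shuffle_order w Q s)"
    using Q_trans unfolding shuffle_order_def trans_def by (auto 0 3)
  moreover have "irrefl (shuffle_order w Q s)"
    using Q_irrefl unfolding shuffle_order_def irrefl_def by auto
  moreover have "total_on {1..n} (shuffle_order w Q s)"
    unfolding total_on_def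
  proof (intro ballI impI)
    fix x y assume xy: "x \<in> {1..n}" "y \<in> {1..n}" "x \<noteq> y"
    show "(x, y) \<in> shuffle_order w Q s \<or> (y, x) \<in> shuffle_order w Q s"
      using s_neq[OF xy] Q_total[OF xy(1,2) _ _ xy(3)] unfolding shuffle_order_def
      by (cases "w x" "w y" rule: linorder_cases; cases "w y" "0::int" rule: linorder_cases) auto
  qed
  ultimately show ?thesis unfolding strict_linear_order_on_def by blast
qed

lemma shuffle_step_permutes:
  assumes "d \<in> step_data n" "s permutes {1..n}"
  shows "shuffle_step n d s permutes {1..n}"
  using assms unfolding step_data_def shuffle_step_def
  by (intro rank_perm_permutes strict_linear_order_on_shuffle_order permutes_inj_on) auto

lemma shuffle_step_less_iff:
  assumes "d \<in> step_data n" "s permutes {1..n}" "x \<in> {1..n}" "y \<in> {1..n}"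
  shows "shuffle_step n d s x < shuffle_step n d s y \<longleftrightarrow> (x, y) \<in> shuffle_order (fst d) (snd d) s"
  using assms unfolding step_data_def shuffle_step_def
  by (intro rank_perm_less_iff strict_linear_order_on_shuffle_order permutes_inj_on) auto

lemma block_start_add_block_size:
  "block_start n w v + block_size n w v = card {q\<in>{1..n}. w q \<le> v}"
proof -
  have "{q\<in>{1..n}. w q \<le> v} = {q\<in>{1..n}. w q < v} \<union> {q\<in>{1..n}. w q = v}" by auto
  then show ?thesis
    unfolding block_start_def block_size_def by (simp add: card_Un_disjoint disjoint_iff)
qed

lemma shuffle_step_id_compatible:
  assumes Q: "Q \<in> strict_orders_on (zero_positions n w)"
  shows "shuffle_step n (w, Q) id \<in> compatible_perms n w"
proof -
  let ?r = "shuffle_order w Q id" and ?p = "shuffle_step n (w, Q) id"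
  have d: "(w, Q) \<in> step_data n" using Q by (simp add: step_data_def)
  have r: "strict_linear_order_on {1..n} ?r"
    by (rule strict_linear_order_on_shuffle_order[OF _ Q]) simp
  have less: "?p x < ?p y \<longleftrightarrow> (x, y) \<in> ?r" if "x \<in> {1..n}" "y \<in> {1..n}" for x y
    using shuffle_step_less_iff[OF d permutes_id that] by simp
  have block: "block_start n w (w x) < ?p x \<and> ?p x \<le> block_start n w (w x) + block_size n w (w x)"
    if x: "x \<in> {1..n}" for x
  proof -
    have "(x, x) \<notin> ?r" using r unfolding strict_linear_order_on_def irrefl_def by blast
    then have "{y\<in>{1..n}. (y, x) \<in> ?r} \<subseteq> {q\<in>{1..n}. w q \<le> w x} - {x}"
      by (auto simp: shuffle_order_def)
    then have "card {y\<in>{1..n}. (y, x) \<in> ?r} \<le> card {q\<in>{1..n}. w q \<le> w x} - 1"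
      using card_mono[of "{q\<in>{1..n}. w q \<le> w x} - {x}"] x by (simp add: card_Diff_singleton)
    moreover have "card {q\<in>{1..n}. w q < w x} \<le> card {y\<in>{1..n}. (y, x) \<in> ?r}"
      by (rule card_mono) (auto simp: shuffle_order_def)
    moreover have "card {q\<in>{1..n}. w q \<le> w x} > 0"
      using x by (auto simp: card_gt_0_iff)
    moreover have "?p x = Suc (card {y\<in>{1..n}. (y, x) \<in> ?r})"
      using x by (simp add: shuffle_step_def rank_perm_def)
    ultimately show ?thesis
      unfolding block_start_add_block_size by (simp add: block_start_def)
  qed
  show ?thesis
    unfolding compatible_perms_def
    using shuffle_step_permutes[OF d permutes_id] block less
    by (auto simp: shuffle_order_def)
qed

lemma compatible_perm_mono:
  assumes p: "p \<in> compatible_perms n w" and x: "x \<in> {1..n}" and y: "y \<in> {1..n}"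
    and xy: "(x, y) \<in> shuffle_order w (induced_order (zero_positions n w) p) id"
  shows "p x < p y"
proof (cases "w x < w y")
  case True
  have "p x \<le> block_start n w (w x) + block_size n w (w x)"
    using p x unfolding compatible_perms_def by blast
  also have "\<dots> = card {q\<in>{1..n}. w q \<le> w x}"
    by (rule block_start_add_block_size)
  also have "\<dots> \<le> block_start n w (w y)"
    unfolding block_start_def by (rule card_mono) (use True in auto)
  also have "\<dots> < p y"
    using p y unfolding compatible_perms_def by blast
  finally show ?thesis .
next
  case False
  then show ?thesis
    using p x y xy unfolding compatible_perms_def shuffle_order_def induced_order_def
    by auto
qed

lemma compatible_perm_eq_shuffle_step:
  assumes p: "p \<in> compatible_perms n w"
  shows "p = shuffle_step n (w, induced_order (zero_positions n w) p) id"
proof -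
  have perm: "p permutes {1..n}" using p unfolding compatible_perms_def by blast
  have "induced_order (zero_positions n w) p \<in> strict_orders_on (zero_positions n w)"
    by (rule induced_order_in_strict_orders_on[OF permutes_inj_on[OF perm]])
  then have "strict_linear_order_on {1..n} (shuffle_order w (induced_order (zero_positions n w) p) id)"
    by (rule strict_linear_order_on_shuffle_order[rotated]) simp
  then show ?thesis
    unfolding shuffle_step_def fst_conv snd_conv
    using permutes_eq_rank_perm[OF perm] compatible_perm_mono[OF p] by blast
qed

lemma induced_order_shuffle_step:
  assumes Q: "Q \<in> strict_orders_on (zero_positions n w)"
  shows "induced_order (zero_positions n w) (shuffle_step n (w, Q) id) = Q"
proof -
  have d: "(w, Q) \<in> step_data n" using Q by (simp add: step_data_def)
  have "Q \<subseteq> zero_positions n w \<times> zero_positions n w" using Q by (simp add: strict_orders_on_def)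
  then show ?thesis
    using shuffle_step_less_iff[OF d permutes_id]
    by (auto simp: induced_order_def shuffle_order_def zero_positions_def)
qed

lemma bij_betw_shuffle_step_compatible_perms:
  "bij_betw (\<lambda>Q. shuffle_step n (w, Q) id) (strict_orders_on (zero_positions n w))
     (compatible_perms n w)"
proof (rule bij_betw_byWitness[where f' = "induced_order (zero_positions n w)"])
  show "(\<lambda>Q. shuffle_step n (w, Q) id) ` strict_orders_on (zero_positions n w) \<subseteq> compatible_perms n w"
    using shuffle_step_id_compatible by blast
  show "induced_order (zero_positions n w) ` compatible_perms n w \<subseteq> strict_orders_on (zero_positions n w)"
    by (auto intro!: induced_order_in_strict_orders_on permutes_inj_on simp: compatible_perms_def)
qed (auto simp: induced_order_shuffle_step compatible_perm_eq_shuffle_step[symmetric])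

lemma pmf_of_set_compatible_perms:
  "pmf_of_set (compatible_perms n w) =
     map_pmf (\<lambda>Q. shuffle_step n (w, Q) id) (pmf_of_set (strict_orders_on (zero_positions n w)))"
  using bij_betw_shuffle_step_compatible_perms[of n w]
  by (auto simp: bij_betw_def map_pmf_of_set_inj strict_orders_on_nonempty
      finite_strict_orders_on zero_positions_def)

section \<open>Relabelling and iteration\<close>

lemma rank_perm_vimage:
  assumes t: "t permutes {1..n}"
  shows "rank_perm n (map_prod t t -` r) = rank_perm n r \<circ> t"
proof
  fix c
  show "rank_perm n (map_prod t t -` r) c = (rank_perm n r \<circ> t) c"
  proof (cases "c \<in> {1..n}")
    case c: True
    have "{y\<in>{1..n}. (y, t c) \<in> r} = {y\<in>t ` {1..n}. (y, t c) \<in> r}"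
      unfolding permutes_image[OF t] ..
    also have "\<dots> = t ` {y\<in>{1..n}. (t y, t c) \<in> r}" by blast
    finally have "card {y\<in>{1..n}. (y, t c) \<in> r} = card {y\<in>{1..n}. (t y, t c) \<in> r}"
      using card_image[OF permutes_inj_on[OF t]] by simp
    then show ?thesis
      using c permutes_in_image[OF t, of c] by (simp add: rank_perm_def)
  qed (auto simp: rank_perm_def permutes_not_in[OF t])
qed

definition relabel :: "(nat \<Rightarrow> nat) \<Rightarrow> (nat \<Rightarrow> int) \<times> nat rel \<Rightarrow> (nat \<Rightarrow> int) \<times> nat rel" where
  "relabel t d = (fst d \<circ> t, map_prod t t -` snd d)"

lemma shuffle_step_relabel:
  assumes "t permutes {1..n}"
  shows "shuffle_step n (relabel t d) (s \<circ> t) = shuffle_step n d s \<circ> t"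
proof -
  have "shuffle_order (fst d \<circ> t) (map_prod t t -` snd d) (s \<circ> t)
      = map_prod t t -` shuffle_order (fst d) (snd d) s"
    by (auto simp: shuffle_order_def)
  then show ?thesis
    using rank_perm_vimage[OF assms] by (simp add: shuffle_step_def relabel_def)
qed

lemma vimage_in_strict_orders_on:
  assumes "inj t" "Q \<in> strict_orders_on A"
  shows "map_prod t t -` Q \<in> strict_orders_on (t -` A)"
proof -
  have "t x \<noteq> t y" if "x \<noteq> y" for x y using assms(1) that unfolding inj_def by blast
  then show ?thesis
    using assms(2)
    unfolding strict_orders_on_def strict_linear_order_on_def trans_def irrefl_def total_on_def
    by auto
qed

lemma vimage_map_prod_inv:
  fixes t :: "'a \<Rightarrow> 'a"
  assumes "bij t"
  shows "map_prod t t -` (map_prod (inv t) (inv t) -` Q) = Q"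
    and "map_prod (inv t) (inv t) -` (map_prod t t -` Q) = Q"
proof -
  have "inv t \<circ> t = id" "t \<circ> inv t = id"
    using inv_o_cancel[OF bij_is_inj[OF assms]] surj_iff[THEN iffD1, OF bij_is_surj[OF assms]] .
  then show "map_prod t t -` (map_prod (inv t) (inv t) -` Q) = Q"
    and "map_prod (inv t) (inv t) -` (map_prod t t -` Q) = Q"
    by (simp_all add: vimage_comp map_prod.comp map_prod.id)
qed

lemma inj_vimage_map_prod:
  fixes t :: "'a \<Rightarrow> 'a"
  assumes "bij t"
  shows "inj (\<lambda>Q. map_prod t t -` Q)"
  by (rule inj_on_inverseI[where g = "\<lambda>Q. map_prod (inv t) (inv t) -` Q"])
    (rule vimage_map_prod_inv(2)[OF assms])

lemma image_vimage_strict_orders_on: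
  fixes t :: "'a \<Rightarrow> 'a"
  assumes t: "bij t"
  shows "(\<lambda>Q. map_prod t t -` Q) ` strict_orders_on A = strict_orders_on (t -` A)"
proof
  show "(\<lambda>Q. map_prod t t -` Q) ` strict_orders_on A \<subseteq> strict_orders_on (t -` A)"
    using vimage_in_strict_orders_on[OF bij_is_inj[OF t]] by blast
  show "strict_orders_on (t -` A) \<subseteq> (\<lambda>Q. map_prod t t -` Q) ` strict_orders_on A"
  proof
    fix Q assume Q: "Q \<in> strict_orders_on (t -` A)"
    have "inv t -` t -` A = A"
      using surj_iff[THEN iffD1, OF bij_is_surj[OF t]] by (simp add: vimage_comp)
    then have Q': "map_prod (inv t) (inv t) -` Q \<in> strict_orders_on A"
      using vimage_in_strict_orders_on[OF bij_is_inj[OF bij_imp_bij_inv[OF t]] Q] by simp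
    show "Q \<in> (\<lambda>Q. map_prod t t -` Q) ` strict_orders_on A"
      by (rule image_eqI[OF _ Q']) (simp add: vimage_map_prod_inv[OF t])
  qed
qed

lemma zero_positions_comp:
  assumes "t permutes {1..n}"
  shows "zero_positions n (w \<circ> t) = t -` zero_positions n w"
  using permutes_in_image[OF assms] by (auto simp: zero_positions_def)

lemma relabel_in_step_data:
  assumes "d \<in> step_data n" "t permutes {1..n}"
  shows "relabel t d \<in> step_data n"
  using assms vimage_in_strict_orders_on[OF permutes_inj[OF assms(2)]]
  by (simp add: step_data_def relabel_def zero_positions_comp)

definition step_data_pmf ::
    "nat \<Rightarrow> (nat \<Rightarrow> real) \<Rightarrow> (nat \<Rightarrow> real) \<Rightarrow> real \<Rightarrow> ((nat \<Rightarrow> int) \<times> nat rel) pmf" where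
  "step_data_pmf n al be ga = word_pmf n al be ga \<bind>
     (\<lambda>w. map_pmf (Pair w) (pmf_of_set (strict_orders_on (zero_positions n w))))"

lemma set_step_data_pmf: "set_pmf (step_data_pmf n al be ga) \<subseteq> step_data n"
  by (auto simp: step_data_pmf_def step_data_def finite_strict_orders_on strict_orders_on_nonempty
      zero_positions_def)

lemma map_step_data_pmf_fst: "map_pmf fst (step_data_pmf n al be ga) = word_pmf n al be ga"
  by (simp add: step_data_pmf_def map_bind_pmf map_pmf_comp bind_return_pmf')

lemma map_word_pmf_comp:
  assumes t: "t permutes {1..n}"
  shows "map_pmf (\<lambda>w. w \<circ> t) (word_pmf n al be ga) = word_pmf n al be ga"
  unfolding word_pmf_def
proof (rule Pi_pmf_bij_betw[symmetric])
  show "bij_betw t {1..n} {1..n}" by (rule permutes_imp_bij[OF t])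
  show "x \<notin> {1..n} \<Longrightarrow> t x \<notin> {1..n}" for x using permutes_not_in[OF t] by simp
qed simp

lemma map_relabel_step_data_pmf:
  assumes t: "t permutes {1..n}"
  shows "map_pmf (relabel t) (step_data_pmf n al be ga) = step_data_pmf n al be ga"
proof -
  let ?orders = "\<lambda>w. pmf_of_set (strict_orders_on (zero_positions n w))"
  have orders: "map_pmf (\<lambda>Q. map_prod t t -` Q) (?orders w) = ?orders (w \<circ> t)" for w
    unfolding zero_positions_comp[OF t] image_vimage_strict_orders_on[OF permutes_bij[OF t], symmetric]
    by (intro map_pmf_of_set_inj inj_on_subset[OF inj_vimage_map_prod[OF permutes_bij[OF t]]])
      (auto simp: strict_orders_on_nonempty finite_strict_orders_on zero_positions_def)
  have "map_pmf (relabel t) (map_pmf (Pair w) (?orders w)) = map_pmf (Pair (w \<circ> t)) (?orders (w \<circ> t))"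
    for w
    unfolding orders[symmetric] by (simp add: map_pmf_comp relabel_def)
  then have "map_pmf (relabel t) (step_data_pmf n al be ga)
      = word_pmf n al be ga \<bind> (\<lambda>w. map_pmf (Pair (w \<circ> t)) (?orders (w \<circ> t)))"
    by (simp add: step_data_pmf_def map_bind_pmf)
  also have "\<dots> = map_pmf (\<lambda>w. w \<circ> t) (word_pmf n al be ga) \<bind> (\<lambda>w. map_pmf (Pair w) (?orders w))"
    by (simp add: bind_map_pmf)
  also have "\<dots> = step_data_pmf n al be ga"
    unfolding map_word_pmf_comp[OF t] step_data_pmf_def ..
  finally show ?thesis .
qed

text \<open>Composing a shuffle with \<open>s\<close> is the same as relabelling its data by \<open>s\<close> and breaking
  the ties by \<open>s\<close>; relabelling preserves the law of the data.\<close>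

lemma map_comp_shuffle_pmf:
  assumes s: "s permutes {1..n}"
  shows "map_pmf (\<lambda>\<pi>. \<pi> \<circ> s) (shuffle_pmf n al be ga)
       = map_pmf (\<lambda>d. shuffle_step n d s) (step_data_pmf n al be ga)"
proof -
  have relabel: "shuffle_step n (relabel s d) s = shuffle_step n d id \<circ> s" for d
    using shuffle_step_relabel[OF s, of d id] by simp
  have "map_pmf (\<lambda>\<pi>. \<pi> \<circ> s) (shuffle_pmf n al be ga)
      = word_pmf n al be ga \<bind> (\<lambda>w. map_pmf (\<lambda>Q. shuffle_step n (w, Q) id \<circ> s)
          (pmf_of_set (strict_orders_on (zero_positions n w))))"
    by (simp add: shuffle_pmf_def pmf_of_set_compatible_perms map_bind_pmf map_pmf_comp)
  also have "\<dots> = map_pmf (\<lambda>d. shuffle_step n (relabel s d) s) (step_data_pmf n al be ga)"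
    by (simp add: step_data_pmf_def relabel map_bind_pmf map_pmf_comp)
  also have "\<dots> = map_pmf (\<lambda>d. shuffle_step n d s) (map_pmf (relabel s) (step_data_pmf n al be ga))"
    by (simp add: map_pmf_comp)
  finally show ?thesis
    unfolding map_relabel_step_data_pmf[OF s] .
qed

lemma foldr_shuffle_step_permutes:
  assumes "set ds \<subseteq> step_data n" "s permutes {1..n}"
  shows "foldr (shuffle_step n) ds s permutes {1..n}"
  using assms
proof (induction ds)
  case (Cons d ds)
  then show ?case using shuffle_step_permutes[of d n "foldr (shuffle_step n) ds s"] by simp
qed simp

lemma set_replicate_step_data_pmf:
  "ds \<in> set_pmf (replicate_pmf k (step_data_pmf n al be ga)) \<Longrightarrow> set ds \<subseteq> step_data n"
  using set_step_data_pmf[of n al be ga] by (auto simp: set_replicate_pmf)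

lemma iter_shuffle_pmf_eq_replicate_pmf:
  "iter_shuffle_pmf n al be ga k
     = map_pmf (\<lambda>ds. foldr (shuffle_step n) ds id) (replicate_pmf k (step_data_pmf n al be ga))"
proof (induction k)
  case (Suc k)
  let ?D = "step_data_pmf n al be ga"
  have perm: "foldr (shuffle_step n) ds id permutes {1..n}" if "ds \<in> set_pmf (replicate_pmf k ?D)" for ds
    using foldr_shuffle_step_permutes[OF set_replicate_step_data_pmf[OF that] permutes_id] .
  have "iter_shuffle_pmf n al be ga (Suc k)
      = replicate_pmf k ?D \<bind> (\<lambda>ds. map_pmf (\<lambda>\<pi>. \<pi> \<circ> foldr (shuffle_step n) ds id) (shuffle_pmf n al be ga))"
    by (simp add: Suc.IH bind_map_pmf id_def)
  also have "\<dots> = replicate_pmf k ?D \<bind> (\<lambda>ds. map_pmf (\<lambda>d. foldr (shuffle_step n) (d # ds) id) ?D)"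
    by (intro bind_pmf_cong refl) (simp only: foldr.simps o_apply map_comp_shuffle_pmf[OF perm])
  also have "\<dots> = map_pmf (\<lambda>ds. foldr (shuffle_step n) ds id) (replicate_pmf (Suc k) ?D)"
    by (simp add: map_pmf_def bind_assoc_pmf bind_return_pmf bind_commute_pmf[of ?D])
  finally show ?case .
qed (simp add: id_def)

section \<open>Separating all pairs of cards\<close>

definition tied_throughout :: "((nat \<Rightarrow> int) \<times> nat rel) list \<Rightarrow> nat \<Rightarrow> nat \<Rightarrow> bool" where
  "tied_throughout ds c e \<longleftrightarrow> (\<forall>d\<in>set ds. fst d c = fst d e \<and> fst d c \<noteq> 0)"

definition separates_all :: "nat \<Rightarrow> ((nat \<Rightarrow> int) \<times> nat rel) list \<Rightarrow> bool" where
  "separates_all n ds \<longleftrightarrow> (\<forall>c\<in>{1..n}. \<forall>e\<in>{1..n}. c \<noteq> e \<longrightarrow> \<not> tied_throughout ds c e)"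

lemma tied_throughout_commute: "tied_throughout ds e c \<longleftrightarrow> tied_throughout ds c e"
  unfolding tied_throughout_def by auto

text \<open>The letter 0 separates as well: ties in the 0-block are broken by the random order, not
  by the previous arrangement.\<close>

lemma foldr_shuffle_step_order_indep:
  assumes ds: "set ds \<subseteq> step_data n" and s0: "s0 permutes {1..n}" and s1: "s1 permutes {1..n}"
    and c: "c \<in> {1..n}" and e: "e \<in> {1..n}" and untied: "\<not> tied_throughout ds c e"
  shows "foldr (shuffle_step n) ds s0 c < foldr (shuffle_step n) ds s0 e
     \<longleftrightarrow> foldr (shuffle_step n) ds s1 c < foldr (shuffle_step n) ds s1 e"
  using ds c e untied
proof (induction ds arbitrary: c e)
  case (Cons d ds)
  let ?a = "foldr (shuffle_step n) ds s0" and ?b = "foldr (shuffle_step n) ds s1"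
  have d: "d \<in> step_data n" and ds: "set ds \<subseteq> step_data n" using Cons.prems(1) by auto
  have a: "?a permutes {1..n}" and b: "?b permutes {1..n}"
    using foldr_shuffle_step_permutes[OF ds] s0 s1 by auto
  have "(c, e) \<in> shuffle_order (fst d) (snd d) ?a \<longleftrightarrow> (c, e) \<in> shuffle_order (fst d) (snd d) ?b"
  proof (cases "fst d c = fst d e \<and> fst d c \<noteq> 0")
    case True
    then have "\<not> tied_throughout ds c e"
      using Cons.prems(4) by (simp add: tied_throughout_def)
    then have "\<not> tied_throughout ds c e" "\<not> tied_throughout ds e c"
      using tied_throughout_commute by blast+
    then show ?thesis
      using Cons.IH[OF ds Cons.prems(2,3)] Cons.IH[OF ds Cons.prems(3,2)] True
      by (auto simp: shuffle_order_def)
  qed (auto simp: shuffle_order_def)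
  then show ?case
    using shuffle_step_less_iff[OF d a Cons.prems(2,3)] shuffle_step_less_iff[OF d b Cons.prems(2,3)]
    by simp
qed (simp add: tied_throughout_def)

lemma foldr_shuffle_step_indep:
  assumes "set ds \<subseteq> step_data n" "separates_all n ds" "s0 permutes {1..n}" "s1 permutes {1..n}"
  shows "foldr (shuffle_step n) ds s0 = foldr (shuffle_step n) ds s1"
proof (rule permutes_eq_if_same_order)
  show "foldr (shuffle_step n) ds s0 permutes {1..n}" "foldr (shuffle_step n) ds s1 permutes {1..n}"
    using foldr_shuffle_step_permutes assms by auto
  show "foldr (shuffle_step n) ds s0 x < foldr (shuffle_step n) ds s0 y
      \<longleftrightarrow> foldr (shuffle_step n) ds s1 x < foldr (shuffle_step n) ds s1 y"
    if "x \<in> {1..n}" "y \<in> {1..n}" for x y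
    using foldr_shuffle_step_order_indep[OF assms(1,3,4) that] assms(2) that
    by (cases "x = y") (auto simp: separates_all_def)
qed

lemma foldr_shuffle_step_relabel:
  assumes "t permutes {1..n}"
  shows "foldr (shuffle_step n) (map (relabel t) ds) (s \<circ> t) = foldr (shuffle_step n) ds s \<circ> t"
proof (induction ds)
  case (Cons d ds)
  have "foldr (shuffle_step n) (map (relabel t) (d # ds)) (s \<circ> t)
      = shuffle_step n (relabel t d) (foldr (shuffle_step n) (map (relabel t) ds) (s \<circ> t))"
    by simp
  also have "\<dots> = shuffle_step n (relabel t d) (foldr (shuffle_step n) ds s \<circ> t)"
    by (simp only: Cons.IH)
  also have "\<dots> = shuffle_step n d (foldr (shuffle_step n) ds s) \<circ> t"
    by (rule shuffle_step_relabel[OF assms])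
  also have "\<dots> = foldr (shuffle_step n) (d # ds) s \<circ> t"
    by (simp only: foldr_Cons o_apply)
  finally show ?case .
qed simp

lemma separates_all_relabel:
  assumes t: "t permutes {1..n}"
  shows "separates_all n (map (relabel t) ds) \<longleftrightarrow> separates_all n ds"
proof -
  have "separates_all n (map (relabel t) ds)
      \<longleftrightarrow> (\<forall>c\<in>{1..n}. \<forall>e\<in>{1..n}. t c \<noteq> t e \<longrightarrow> \<not> tied_throughout ds (t c) (t e))"
    using permutes_inj[OF t] by (simp add: separates_all_def tied_throughout_def relabel_def inj_eq)
  also have "\<dots> \<longleftrightarrow> (\<forall>c\<in>t ` {1..n}. \<forall>e\<in>t ` {1..n}. c \<noteq> e \<longrightarrow> \<not> tied_throughout ds c e)"
    by blast
  finally show ?thesis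
    unfolding permutes_image[OF t] separates_all_def .
qed

lemma map_replicate_pmf:
  assumes "map_pmf f p = p"
  shows "map_pmf (map f) (replicate_pmf k p) = replicate_pmf k p"
proof (induction k)
  case (Suc k)
  have "map_pmf (map f) (replicate_pmf (Suc k) p)
      = map_pmf f p \<bind> (\<lambda>x. map_pmf (map f) (replicate_pmf k p) \<bind> (\<lambda>xs. return_pmf (x # xs)))"
    by (simp add: map_pmf_def bind_assoc_pmf bind_return_pmf)
  then show ?case by (simp add: Suc.IH assms)
qed simp

lemma foldr_shuffle_step_relabel_id:
  assumes ds: "set ds \<subseteq> step_data n" and sep: "separates_all n ds" and t: "t permutes {1..n}"
  shows "foldr (shuffle_step n) (map (relabel t) ds) id = foldr (shuffle_step n) ds id \<circ> t"
proof -
  have ds': "set (map (relabel t) ds) \<subseteq> step_data n"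
    using ds relabel_in_step_data[OF _ t] by auto
  have "foldr (shuffle_step n) (map (relabel t) ds) id = foldr (shuffle_step n) (map (relabel t) ds) (id \<circ> t)"
    using foldr_shuffle_step_indep[OF ds' _ permutes_id t] sep separates_all_relabel[OF t] by simp
  then show ?thesis using foldr_shuffle_step_relabel[OF t, of ds id] by simp
qed

text \<open>Relabelling by \<open>t\<close> preserves the law of the data and, on separating data, composes the
  resulting arrangement with \<open>t\<close>.\<close>

lemma prob_foldr_shuffle_step_eq_separates_all:
  fixes al be :: "nat \<Rightarrow> real" and ga :: real and k :: nat
  assumes t: "t permutes {1..n}"
  defines "X \<equiv> replicate_pmf k (step_data_pmf n al be ga)"
  shows "measure_pmf.prob X {ds. foldr (shuffle_step n) ds id = t \<and> separates_all n ds}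
       = measure_pmf.prob X {ds. foldr (shuffle_step n) ds id = id \<and> separates_all n ds}"
proof -
  let ?E = "\<lambda>r. {ds. foldr (shuffle_step n) ds id = r \<and> separates_all n ds}"
  have X: "map_pmf (map (relabel t)) X = X"
    unfolding X_def by (rule map_replicate_pmf[OF map_relabel_step_data_pmf[OF t]])
  have relabel: "foldr (shuffle_step n) (map (relabel t) ds) id = foldr (shuffle_step n) ds id \<circ> t"
    if "ds \<in> set_pmf X" "separates_all n ds" for ds
    by (rule foldr_shuffle_step_relabel_id[OF set_replicate_step_data_pmf[OF that(1)[unfolded X_def]]
          that(2) t])
  have cancel: "r \<circ> t = t \<longleftrightarrow> r = id" for r :: "nat \<Rightarrow> nat"
  proof
    assume "r \<circ> t = t"
    then have "r \<circ> (t \<circ> inv t) = t \<circ> inv t" by (simp add: o_assoc)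
    then show "r = id" by (simp add: permutes_inv_o(1)[OF t])
  qed simp
  have "map (relabel t) ds \<in> ?E t \<longleftrightarrow> ds \<in> ?E id" if "ds \<in> set_pmf X" for ds
    by (cases "separates_all n ds") (simp_all add: relabel[OF that] cancel separates_all_relabel[OF t])
  then have support: "map (relabel t) -` ?E t \<inter> set_pmf X = ?E id \<inter> set_pmf X"
    by blast
  have "measure_pmf.prob X (?E t) = measure_pmf.prob (map_pmf (map (relabel t)) X) (?E t)"
    unfolding X ..
  also have "\<dots> = measure_pmf.prob X (map (relabel t) -` ?E t \<inter> set_pmf X)"
    by (simp add: measure_Int_set_pmf)
  also have "\<dots> = measure_pmf.prob X (?E id)"
    unfolding support by (rule measure_Int_set_pmf)
  finally show ?thesis .
qed

section \<open>The bound in terms of the collision probability\<close>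

lemma measure_pair_pmf_Times:
  "measure_pmf.prob (pair_pmf p q) (A \<times> B) = measure_pmf.prob p A * measure_pmf.prob q B"
proof -
  have "measure_pmf.prob (pair_pmf p q) (A \<times> B)
      = measure_pmf.prob (pair_pmf p q) ((A \<inter> set_pmf p) \<times> (B \<inter> set_pmf q))"
    by (metis measure_Int_set_pmf set_pair_pmf Times_Int_Times)
  also have "\<dots> = measure_pmf.prob p (A \<inter> set_pmf p) * measure_pmf.prob q (B \<inter> set_pmf q)"
    by (intro measure_pmf_prob_product countable_Int2 countable_set_pmf)
  finally show ?thesis by (simp add: measure_Int_set_pmf)
qed

lemma prob_replicate_pmf_all:
  "measure_pmf.prob (replicate_pmf k p) {xs. \<forall>x\<in>set xs. P x} = measure_pmf.prob p {x. P x} ^ k"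
proof (induction k)
  case (Suc k)
  have "replicate_pmf (Suc k) p = map_pmf (\<lambda>(x, xs). x # xs) (pair_pmf p (replicate_pmf k p))"
    by (simp add: pair_pmf_def map_pmf_def bind_assoc_pmf bind_return_pmf)
  moreover have "(\<lambda>(x, xs). x # xs) -` {xs. \<forall>x\<in>set xs. P x} = {x. P x} \<times> {xs. \<forall>x\<in>set xs. P x}"
    by auto
  ultimately show ?case by (simp add: measure_pair_pmf_Times Suc.IH)
qed simp

definition nonzero_collision_prob :: "(nat \<Rightarrow> real) \<Rightarrow> (nat \<Rightarrow> real) \<Rightarrow> real \<Rightarrow> real" where
  "nonzero_collision_prob al be ga =
     measure_pmf.prob (pair_pmf (letter_pmf al be ga) (letter_pmf al be ga)) {(x, y). x = y \<and> x \<noteq> 0}"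

lemma map_word_pmf_pair:
  assumes c: "c \<in> {1..n}" and e: "e \<in> {1..n}" and "c \<noteq> e"
  shows "map_pmf (\<lambda>w. (w c, w e)) (word_pmf n al be ga)
       = pair_pmf (letter_pmf al be ga) (letter_pmf al be ga)"
proof -
  let ?L = "letter_pmf al be ga"
  define R where "R = {1..n} - {c, e}"
  have split: "{1..n} = insert c (insert e R)" using c e by (auto simp: R_def)
  have R: "finite R" "e \<notin> R" "c \<notin> insert e R" using \<open>c \<noteq> e\<close> by (auto simp: R_def)
  have "word_pmf n al be ga = map_pmf (\<lambda>(y, f). f(c := y))
      (pair_pmf ?L (map_pmf (\<lambda>(z, f). f(e := z)) (pair_pmf ?L (Pi_pmf R 0 (\<lambda>_. ?L)))))"
    unfolding word_pmf_def split Pi_pmf_insert[OF finite_insert[THEN iffD2, OF R(1)] R(3)]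
      Pi_pmf_insert[OF R(1,2)] ..
  also have "\<dots> = map_pmf (\<lambda>(y, f). f(c := y))
      (map_pmf (apsnd (\<lambda>(z, f). f(e := z))) (pair_pmf ?L (pair_pmf ?L (Pi_pmf R 0 (\<lambda>_. ?L)))))"
    unfolding pair_map_pmf2 ..
  finally have word: "word_pmf n al be ga = \<dots>" .
  have "map_pmf (\<lambda>w. (w c, w e)) (word_pmf n al be ga)
      = map_pmf (\<lambda>(a, b). (id a, fst b)) (pair_pmf ?L (pair_pmf ?L (Pi_pmf R 0 (\<lambda>_. ?L))))"
    unfolding word map_pmf_comp using \<open>c \<noteq> e\<close>
    by (intro map_pmf_cong refl) (auto simp: case_prod_beta)
  also have "\<dots> = pair_pmf ?L ?L"
    unfolding map_pair map_fst_pair_pmf pmf.map_id0 by simp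
  finally show ?thesis .
qed

lemma prob_tied_throughout:
  assumes "c \<in> {1..n}" "e \<in> {1..n}" "c \<noteq> e"
  shows "measure_pmf.prob (replicate_pmf k (step_data_pmf n al be ga)) {ds. tied_throughout ds c e}
       = nonzero_collision_prob al be ga ^ k"
proof -
  have "measure_pmf.prob (step_data_pmf n al be ga) {d. fst d c = fst d e \<and> fst d c \<noteq> 0}
      = measure_pmf.prob (map_pmf (\<lambda>w. (w c, w e)) (map_pmf fst (step_data_pmf n al be ga)))
          {(x, y). x = y \<and> x \<noteq> 0}"
    by simp
  also have "\<dots> = nonzero_collision_prob al be ga"
    unfolding map_step_data_pmf_fst map_word_pmf_pair[OF assms] nonzero_collision_prob_def ..
  finally show ?thesis
    unfolding tied_throughout_def by (simp add: prob_replicate_pmf_all)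
qed

lemma prob_not_separates_all_le:
  "measure_pmf.prob (replicate_pmf k (step_data_pmf n al be ga)) {ds. \<not> separates_all n ds}
     \<le> real (n choose 2) * nonzero_collision_prob al be ga ^ k"
proof -
  let ?X = "replicate_pmf k (step_data_pmf n al be ga)"
  let ?pairs = "{A. A \<subseteq> {1..n} \<and> card A = 2}"
  let ?tied = "\<lambda>A. {ds. \<exists>c\<in>A. \<exists>e\<in>A. c \<noteq> e \<and> tied_throughout ds c e}"
  have fin: "finite ?pairs" by simp
  have "{ds. \<not> separates_all n ds} \<subseteq> (\<Union>A\<in>?pairs. ?tied A)"
  proof
    fix ds assume "ds \<in> {ds. \<not> separates_all n ds}"
    then obtain c e where "c \<in> {1..n}" "e \<in> {1..n}" "c \<noteq> e" "tied_throughout ds c e"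
      by (auto simp: separates_all_def)
    then show "ds \<in> (\<Union>A\<in>?pairs. ?tied A)"
      by (intro UN_I[of "{c, e}"]) auto
  qed
  then have "measure_pmf.prob ?X {ds. \<not> separates_all n ds} \<le> measure_pmf.prob ?X (\<Union>A\<in>?pairs. ?tied A)"
    by (rule measure_pmf.finite_measure_mono) simp
  also have "\<dots> \<le> (\<Sum>A\<in>?pairs. measure_pmf.prob ?X (?tied A))"
    by (rule measure_pmf.finite_measure_subadditive_finite[OF fin]) simp
  also have "\<dots> = (\<Sum>A\<in>?pairs. nonzero_collision_prob al be ga ^ k)"
  proof (rule sum.cong[OF refl])
    fix A assume "A \<in> ?pairs"
    then obtain c e where A: "A = {c, e}" "c \<noteq> e" "c \<in> {1..n}" "e \<in> {1..n}"
      by (auto simp: card_2_iff)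
    then have "?tied A = {ds. tied_throughout ds c e}"
      using tied_throughout_commute by auto
    then show "measure_pmf.prob ?X (?tied A) = nonzero_collision_prob al be ga ^ k"
      using prob_tied_throughout[OF A(3,4,2)] by simp
  qed
  also have "\<dots> = real (n choose 2) * nonzero_collision_prob al be ga ^ k"
    using n_subsets[of "{1..n}" 2] by simp
  finally show ?thesis .
qed

lemma prob_le_card_mult_prob_if_uniform:
  assumes S: "finite S" "r \<in> S"
    and range: "\<And>x. x \<in> set_pmf X \<Longrightarrow> E x \<Longrightarrow> F x \<in> S"
    and uniform: "\<And>r'. r' \<in> S \<Longrightarrow>
      measure_pmf.prob X {x. F x = r' \<and> E x} = measure_pmf.prob X {x. F x = r \<and> E x}"
  shows "measure_pmf.prob X {x. E x} \<le> card S * measure_pmf.prob X {x. F x = r}"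
proof -
  have "measure_pmf.prob X {x. E x} = measure_pmf.prob X ({x. E x} \<inter> set_pmf X)"
    by (simp add: measure_Int_set_pmf)
  also have "\<dots> \<le> measure_pmf.prob X (\<Union>r'\<in>S. {x. F x = r' \<and> E x})"
    by (rule measure_pmf.finite_measure_mono) (use range in auto)
  also have "\<dots> \<le> (\<Sum>r'\<in>S. measure_pmf.prob X {x. F x = r' \<and> E x})"
    by (rule measure_pmf.finite_measure_subadditive_finite[OF S(1)]) simp
  also have "\<dots> = card S * measure_pmf.prob X {x. F x = r \<and> E x}"
    using uniform by simp
  also have "\<dots> \<le> card S * measure_pmf.prob X {x. F x = r}"
    by (intro mult_left_mono measure_pmf.finite_measure_mono) auto
  finally show ?thesis .
qed

lemma sep_dist_le:
  assumes "\<And>\<pi>. \<pi> permutes {1..n} \<Longrightarrow> 1 - \<epsilon> \<le> fact n * pmf P \<pi>"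
  shows "sep_dist n P \<le> \<epsilon>"
proof -
  have "finite {\<pi>. \<pi> permutes {1..n}}" "{\<pi>. \<pi> permutes {1..n}} \<noteq> {}"
    using finite_permutations permutes_id by blast+
  then show ?thesis
    unfolding sep_dist_def using assms by (subst Max_le_iff) (auto simp: algebra_simps)
qed

theorem sep_dist_iter_shuffle_pmf_le:
  "sep_dist n (iter_shuffle_pmf n al be ga k) \<le> real (n choose 2) * nonzero_collision_prob al be ga ^ k"
proof (rule sep_dist_le)
  fix r :: "nat \<Rightarrow> nat" assume r: "r permutes {1..n}"
  let ?X = "replicate_pmf k (step_data_pmf n al be ga)"
  let ?F = "\<lambda>ds. foldr (shuffle_step n) ds id"
  have "1 - real (n choose 2) * nonzero_collision_prob al be ga ^ k
      \<le> 1 - measure_pmf.prob ?X {ds. \<not> separates_all n ds}"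
    using prob_not_separates_all_le by simp
  also have "\<dots> = measure_pmf.prob ?X {ds. separates_all n ds}"
    using measure_pmf.prob_compl[of "{ds. separates_all n ds}" ?X] by (simp add: set_diff_eq)
  also have "\<dots> \<le> card {\<pi>. \<pi> permutes {1..n}} * measure_pmf.prob ?X {ds. ?F ds = r}"
  proof (rule prob_le_card_mult_prob_if_uniform)
    show "finite {\<pi>. \<pi> permutes {1..n}}" by (simp add: finite_permutations)
    show "?F ds \<in> {\<pi>. \<pi> permutes {1..n}}" if "ds \<in> set_pmf ?X" for ds
      using foldr_shuffle_step_permutes[OF set_replicate_step_data_pmf[OF that] permutes_id] by simp
    show "measure_pmf.prob ?X {ds. ?F ds = r' \<and> separates_all n ds}
        = measure_pmf.prob ?X {ds. ?F ds = r \<and> separates_all n ds}"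
      if "r' \<in> {\<pi>. \<pi> permutes {1..n}}" for r'
      using prob_foldr_shuffle_step_eq_separates_all[of r'] prob_foldr_shuffle_step_eq_separates_all[OF r]
        that by simp
  qed (use r in simp)
  also have "\<dots> = fact n * pmf (iter_shuffle_pmf n al be ga k) r"
    by (simp add: card_permutations iter_shuffle_pmf_eq_replicate_pmf pmf_map vimage_def)
  finally show "1 - real (n choose 2) * nonzero_collision_prob al be ga ^ k
      \<le> fact n * pmf (iter_shuffle_pmf n al be ga k) r" .
qed

section \<open>Computing the collision probability\<close>

lemma has_sum_int_nonzero:
  fixes g :: "int \<Rightarrow> 'a::topological_comm_monoid_add"
  assumes pos: "((\<lambda>i. g (int i)) has_sum a) {1..}" and neg: "((\<lambda>i. g (- int i)) has_sum b) {1..}"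
  shows "(g has_sum (a + b)) (- {0})"
proof -
  have "(g has_sum a) {0<..}"
    using pos has_sum_reindex_bij_witness[of "{1..}" nat int "{0<..}" g "\<lambda>i. g (int i)" a a] by auto
  moreover have "(g has_sum b) {..<0}"
    using neg has_sum_reindex_bij_witness[of "{1..}" "\<lambda>z. nat (- z)" "\<lambda>i. - int i" "{..<0}" g
        "\<lambda>i. g (- int i)" b b]
    by auto
  ultimately have "(g has_sum (a + b)) ({0<..} \<union> {..<0})"
    by (rule has_sum_Un_disjoint) auto
  moreover have "{0<..} \<union> {..<0} = - {0::int}" by auto
  ultimately show ?thesis by simp
qed

lemma set_abs_summable_on_iff_summable_on:
  fixes f :: "'a \<Rightarrow> real"
  shows "Infinite_Set_Sum.abs_summable_on f S \<longleftrightarrow> f summable_on S"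
  using abs_summable_equivalent summable_on_iff_abs_summable_on_real by blast

definition letter_weight :: "(nat \<Rightarrow> real) \<Rightarrow> (nat \<Rightarrow> real) \<Rightarrow> real \<Rightarrow> int \<Rightarrow> real" where
  "letter_weight al be ga z = (if z > 0 then al (nat z) else if z < 0 then be (nat (- z)) else ga)"

locale letter_weights =
  fixes al be :: "nat \<Rightarrow> real" and ga A B :: real
  assumes ga_nonneg: "ga \<ge> 0"
    and al_nonneg: "\<And>i. i \<ge> 1 \<Longrightarrow> al i \<ge> 0"
    and be_nonneg: "\<And>i. i \<ge> 1 \<Longrightarrow> be i \<ge> 0"
    and has_sum_al: "(al has_sum A) {1..}"
    and has_sum_be: "(be has_sum B) {1..}"
    and total: "ga + A + B = 1"
begin

abbreviation "w \<equiv> letter_weight al be ga"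

lemma letter_weight_nonneg: "w z \<ge> 0"
  using al_nonneg be_nonneg ga_nonneg by (simp add: letter_weight_def)

lemma has_sum_letter_weight: "(w has_sum 1) UNIV"
proof -
  have "((\<lambda>i. w (int i)) has_sum A) {1..}"
    using has_sum_al by (rule has_sum_cong[THEN iffD1, rotated]) (simp add: letter_weight_def)
  moreover have "((\<lambda>i. w (- int i)) has_sum B) {1..}"
    using has_sum_be by (rule has_sum_cong[THEN iffD1, rotated]) (simp add: letter_weight_def)
  ultimately have "(w has_sum (A + B)) (- {0})"
    by (rule has_sum_int_nonzero)
  then have "(w has_sum (w 0 + (A + B))) (insert 0 (- {0}))"
    by (rule has_sum_insert[rotated]) simp
  moreover have "w 0 + (A + B) = 1" using total by (simp add: letter_weight_def)
  moreover have "insert 0 (- {0}) = (UNIV :: int set)" by auto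
  ultimately show ?thesis by simp
qed

lemma pmf_letter_pmf: "pmf (letter_pmf al be ga) z = w z"
proof -
  have summable: "Infinite_Set_Sum.abs_summable_on w UNIV"
    using has_sum_letter_weight
    by (auto simp: set_abs_summable_on_iff_summable_on dest: has_sum_imp_summable)
  have "(\<integral>\<^sup>+z. ennreal (w z) \<partial>count_space UNIV) = ennreal (infsetsum w UNIV)"
    by (rule nn_integral_conv_infsetsum[OF summable letter_weight_nonneg])
  also have "infsetsum w UNIV = 1"
    using infsetsum_infsum[OF summable] infsumI[OF has_sum_letter_weight] by simp
  finally have "(\<integral>\<^sup>+z. ennreal (w z) \<partial>count_space UNIV) = 1" by simp
  moreover have "letter_pmf al be ga = embed_pmf w"
    by (simp add: letter_pmf_def letter_weight_def[abs_def])
  ultimately show ?thesis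
    using pmf_embed_pmf[OF letter_weight_nonneg] by simp
qed

lemma has_sum_letter_weight_squares:
  "((\<lambda>z. (w z)\<^sup>2) has_sum (infsum (\<lambda>i. (al i)\<^sup>2) {1..} + infsum (\<lambda>i. (be i)\<^sup>2) {1..})) (- {0})"
proof (rule has_sum_int_nonzero)
  have square_le: "(w z)\<^sup>2 \<le> w z" for z
    using pmf_le_1[of "letter_pmf al be ga" z] letter_weight_nonneg[of z]
    by (simp add: pmf_letter_pmf power2_eq_square mult_left_le)
  have al_sq: "(al i)\<^sup>2 \<le> al i" and be_sq: "(be i)\<^sup>2 \<le> be i" if "i \<in> {1..}" for i
    using square_le[of "int i"] square_le[of "- int i"] that by (simp_all add: letter_weight_def)
  have "(\<lambda>i. (al i)\<^sup>2) summable_on {1..}"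
    by (rule summable_on_comparison_test[OF has_sum_imp_summable[OF has_sum_al] al_sq]) simp_all
  from has_sum_infsum[OF this]
  show "((\<lambda>i. (w (int i))\<^sup>2) has_sum infsum (\<lambda>i. (al i)\<^sup>2) {1..}) {1..}"
    by (rule has_sum_cong[THEN iffD1, rotated]) (simp add: letter_weight_def)
  have "(\<lambda>i. (be i)\<^sup>2) summable_on {1..}"
    by (rule summable_on_comparison_test[OF has_sum_imp_summable[OF has_sum_be] be_sq]) simp_all
  from has_sum_infsum[OF this]
  show "((\<lambda>i. (w (- int i))\<^sup>2) has_sum infsum (\<lambda>i. (be i)\<^sup>2) {1..}) {1..}"
    by (rule has_sum_cong[THEN iffD1, rotated]) (simp add: letter_weight_def)
qed

lemma nonzero_collision_prob_eq_sum_squares: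
  "nonzero_collision_prob al be ga = infsum (\<lambda>i. (al i)\<^sup>2) {1..} + infsum (\<lambda>i. (be i)\<^sup>2) {1..}"
proof -
  let ?L = "letter_pmf al be ga"
  have diagonal: "bij_betw (\<lambda>z. (z, z)) (- {0}) {(x, y). x = y \<and> x \<noteq> (0::int)}"
    by (rule bij_betw_byWitness[where f' = fst]) auto
  have summable: "Infinite_Set_Sum.abs_summable_on (\<lambda>z. (w z)\<^sup>2) (- {0})"
    using has_sum_letter_weight_squares
    by (auto simp: set_abs_summable_on_iff_summable_on dest: has_sum_imp_summable)
  have "nonzero_collision_prob al be ga = infsetsum (pmf (pair_pmf ?L ?L)) {(x, y). x = y \<and> x \<noteq> 0}"
    unfolding nonzero_collision_prob_def by (rule measure_pmf_conv_infsetsum)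
  also have "\<dots> = infsetsum (\<lambda>z. pmf (pair_pmf ?L ?L) (z, z)) (- {0})"
    by (rule infsetsum_reindex_bij_betw[OF diagonal, symmetric])
  also have "\<dots> = infsetsum (\<lambda>z. (w z)\<^sup>2) (- {0})"
    by (simp add: pmf_pair pmf_letter_pmf power2_eq_square)
  also have "\<dots> = infsum (\<lambda>z. (w z)\<^sup>2) (- {0})"
    by (rule infsetsum_infsum[OF summable])
  finally show ?thesis
    using infsumI[OF has_sum_letter_weight_squares] by simp
qed

end

theorem theorem7p1:
  fixes al be :: "nat \<Rightarrow> real" and ga A B :: real and n k :: nat
  assumes "ga \<ge> 0"
    and "\<And>i. i \<ge> 1 \<Longrightarrow> al i \<ge> 0"
    and "\<And>i. i \<ge> 1 \<Longrightarrow> be i \<ge> 0"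
    and "(al has_sum A) {1..}"
    and "(be has_sum B) {1..}"
    and "ga + A + B = 1"
  shows "sep_dist n (iter_shuffle_pmf n al be ga k)
           \<le> real (n choose 2) *
             (infsum (\<lambda>i. (al i)\<^sup>2) {1..} + infsum (\<lambda>i. (be i)\<^sup>2) {1..}) ^ k"
proof -
  interpret letter_weights al be ga A B
    using assms by unfold_locales
  show ?thesis
    using sep_dist_iter_shuffle_pmf_le[of n al be ga k]
    unfolding nonzero_collision_prob_eq_sum_squares .
qed

end
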